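(* If $n\ge1$ and $0\le m\le n$, then $\operatorname{diam}(Y_{n,m})=\lfloor n(m+1)/2\rfloor$.
   Context: For integers $n\ge1$, $m\ge0$, the Yoke graph $Y_{n,m}$ is the simple graph whose vertices are the tuples $v=(v_0,\dots,v_{m+1})$ with $v_0,v_{m+1}\in\mathbb{Z}_n$, $v_1,\dots,v_m\in\{0,1\}$, $\sum_{i=0}^{m+1}v_i\equiv0\pmod n$; $u\sim v$ iff there is $0\le i\le m$ with $u_j=v_j$ for $j\notin\{i,i+1\}$ and either ($u_i=v_i+1$, $u_{i+1}=v_{i+1}-1$) or ($u_i=v_i-1$, $u_{i+1}=v_{i+1}+1$), bucket entries (indices $0,m+1$) computed mod $n$. *)

theory Defs
  imports Main "HOL-Library.Extended_Nat"
begin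

text \<open>Vertices of the Yoke graph Y(n,m): integer lists v = [v_0, ..., v_(m+1)] of length m+2,
  with bucket entries v_0, v_(m+1) in Z_n represented by 0..n-1, interior entries in {0,1},
  and total sum divisible by n.\<close>
definition yoke_vert :: "nat \<Rightarrow> nat \<Rightarrow> int list \<Rightarrow> bool" where
  "yoke_vert n m v \<longleftrightarrow> length v = m + 2
     \<and> 0 \<le> v ! 0 \<and> v ! 0 < int n
     \<and> 0 \<le> v ! (m+1) \<and> v ! (m+1) < int n
     \<and> (\<forall>i\<in>{1..m}. v ! i \<in> {0, 1})
     \<and> sum_list v mod int n = 0"

definition yoke_entry :: "nat \<Rightarrow> nat \<Rightarrow> nat \<Rightarrow> int \<Rightarrow> int" where
  "yoke_entry n m j x = (if j = 0 \<or> j = m + 1 then x mod int n else x)"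

definition yoke_adj :: "nat \<Rightarrow> nat \<Rightarrow> int list \<Rightarrow> int list \<Rightarrow> bool" where
  "yoke_adj n m u v \<longleftrightarrow> yoke_vert n m u \<and> yoke_vert n m v \<and> u \<noteq> v \<and>
     (\<exists>i\<le>m. (\<forall>j<m+2. j \<noteq> i \<and> j \<noteq> i + 1 \<longrightarrow> u ! j = v ! j) \<and>
        ((u ! i = yoke_entry n m i (v ! i + 1) \<and> u ! (i+1) = yoke_entry n m (i+1) (v ! (i+1) - 1)) \<or>
         (u ! i = yoke_entry n m i (v ! i - 1) \<and> u ! (i+1) = yoke_entry n m (i+1) (v ! (i+1) + 1))))"

definition yoke_dist :: "nat \<Rightarrow> nat \<Rightarrow> int list \<Rightarrow> int list \<Rightarrow> enat" where
  "yoke_dist n m u v = (INF k \<in> {k. (yoke_adj n m ^^ k) u v}. enat k)"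

definition yoke_diam :: "nat \<Rightarrow> nat \<Rightarrow> enat" where
  "yoke_diam n m = (SUP p \<in> {(u, v). yoke_vert n m u \<and> yoke_vert n m v}. yoke_dist n m (fst p) (snd p))"

end

(* A vertex v is encoded by its heights h j = v_0 + ... + v_j for j <= m: a staircase with steps
   0 or 1, determined by v up to adding a common multiple of n. Up to such a multiple, an edge
   changes a single height by one, so the distance from u to v is the minimum over t of
   sum_j |h_v j - h_u j - n t|. Since h_v - h_u has steps of size at most one and m <= n, some t
   makes this at most n (m + 1) / 2; the vertex whose heights all lie as close to n / 2 as possible
   attains the bound against the vertex with all heights 0. *)
theory Submission
  imports Defs
begin

definition staircase :: "nat \<Rightarrow> (nat \<Rightarrow> int) \<Rightarrow> bool" where
  "staircase m P \<longleftrightarrow> (\<forall>j<m. P (Suc j) - P j \<in> {0, 1})"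

definition path_vertex :: "nat \<Rightarrow> nat \<Rightarrow> (nat \<Rightarrow> int) \<Rightarrow> int list" where
  "path_vertex n m P = map (\<lambda>j. if j = 0 then P 0 mod int n else if j = m + 1 then - P m mod int n
     else P j - P (j - 1)) [0..<m + 2]"

definition height :: "int list \<Rightarrow> nat \<Rightarrow> int" where
  "height w j = (\<Sum>k\<le>j. w ! k)"

lemma staircaseD: "staircase m P \<Longrightarrow> j < m \<Longrightarrow> P j \<le> P (Suc j) \<and> P (Suc j) \<le> P j + 1"
  unfolding staircase_def by (drule spec[of _ j]) auto

lemma staircase_min:
  assumes "staircase m P" and "staircase m Q"
  shows "staircase m (\<lambda>j. min (P j) (Q j))"
  unfolding staircase_def
proof (intro allI impI)
  fix j assume "j < m"
  then show "min (P (Suc j)) (Q (Suc j)) - min (P j) (Q j) \<in> {0, 1}"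
    using staircaseD[OF assms(1) \<open>j < m\<close>] staircaseD[OF assms(2) \<open>j < m\<close>]
    by (simp add: min_def) linarith
qed

lemma length_path_vertex [simp]: "length (path_vertex n m P) = m + 2"
  by (simp add: path_vertex_def)

lemma nth_path_vertex:
  "j < m + 2 \<Longrightarrow> path_vertex n m P ! j = (if j = 0 then P 0 mod int n
     else if j = m + 1 then - P m mod int n else P j - P (j - 1))"
  by (simp add: path_vertex_def del: upt_Suc)

lemma path_vertex_cong: "(\<And>j. j \<le> m \<Longrightarrow> P j = Q j) \<Longrightarrow> path_vertex n m P = path_vertex n m Q"
  unfolding path_vertex_def by (intro map_cong refl) auto

lemma path_vertex_shift: "path_vertex n m (\<lambda>j. P j + int n * t) = path_vertex n m P"
proof -
  have "(- P m - int n * t) mod int n = - P m mod int n"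
    by (metis diff_conv_add_uminus mod_mult_self2 mult.commute mult_minus_left)
  then show ?thesis
    unfolding path_vertex_def by (intro map_cong refl) simp
qed

lemma yoke_vert_path_vertex:
  assumes n: "1 \<le> n" and P: "staircase m P"
  shows "yoke_vert n m (path_vertex n m P)"
proof -
  let ?v = "path_vertex n m P"
  have "sum_list ?v = (\<Sum>j<Suc m. ?v ! j) + ?v ! (m + 1)"
    by (simp add: sum_list_sum_nth atLeast0LessThan)
  also have "(\<Sum>j<Suc m. ?v ! j) = ?v ! 0 + (\<Sum>j<m. ?v ! Suc j)"
    by (rule sum.lessThan_Suc_shift)
  also have "(\<Sum>j<m. ?v ! Suc j) = (\<Sum>j<m. P (Suc j) - P j)"
    by (intro sum.cong refl) (simp add: nth_path_vertex)
  finally have "sum_list ?v = P 0 mod int n + (P m - P 0) + - P m mod int n"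
    by (simp add: sum_lessThan_telescope nth_path_vertex)
  also have "\<dots> = int n * (- (P 0 div int n) - (- P m div int n))"
    by (simp add: algebra_simps minus_div_mult_eq_mod[symmetric])
  finally have "sum_list ?v mod int n = 0"
    by simp
  moreover have "?v ! i \<in> {0, 1}" if "i \<in> {1..m}" for i
    using that P by (cases i) (auto simp: nth_path_vertex staircase_def)
  moreover have "0 \<le> ?v ! 0 \<and> ?v ! 0 < int n \<and> 0 \<le> ?v ! (m + 1) \<and> ?v ! (m + 1) < int n"
    using n by (simp add: nth_path_vertex)
  ultimately show ?thesis
    unfolding yoke_vert_def by simp
qed

lemma height_0: "height w 0 = w ! 0"
  by (simp add: height_def)

lemma height_Suc: "height w (Suc j) = height w j + w ! Suc j"
  by (simp add: height_def)

lemma staircase_height: "yoke_vert n m w \<Longrightarrow> staircase m (height w)"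
  unfolding staircase_def yoke_vert_def by (auto simp: height_Suc)

text \<open>The last bucket is forced by the divisibility of the total sum by \<open>n\<close>.\<close>
lemma path_vertex_height:
  assumes w: "yoke_vert n m w"
  shows "path_vertex n m (height w) = w"
proof (rule nth_equalityI)
  have len: "length w = m + 2"
    using w by (simp add: yoke_vert_def)
  then show "length (path_vertex n m (height w)) = length w"
    by simp
  fix j assume "j < length (path_vertex n m (height w))"
  then have j: "j < m + 2"
    by simp
  consider "j = 0" | "j = m + 1" | k where "j = Suc k" "k < m"
    using j by (cases j) (auto, linarith)
  then show "path_vertex n m (height w) ! j = w ! j"
  proof cases
    case 1
    then show ?thesis
      using w by (simp add: nth_path_vertex height_0 yoke_vert_def)
  next
    case 2
    have "sum_list w = height w m + w ! (m + 1)"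
      using len by (simp add: sum_list_sum_nth height_def atLeast0LessThan
          lessThan_Suc_atMost[symmetric])
    then have "(height w m + w ! (m + 1)) mod int n = 0"
      using w by (simp add: yoke_vert_def)
    then have "- height w m mod int n = (- height w m + (height w m + w ! (m + 1))) mod int n"
      by (metis add.right_neutral mod_add_right_eq)
    also have "\<dots> = w ! (m + 1)"
      using w by (simp add: yoke_vert_def)
    finally show ?thesis
      using 2 by (simp add: nth_path_vertex)
  next
    case 3
    then show ?thesis
      by (simp add: nth_path_vertex height_Suc)
  qed
qed

lemma height_path_vertex:
  assumes "0 \<le> P 0" and "P 0 < int n" and "j \<le> m"
  shows "height (path_vertex n m P) j = P j"
  using assms(3)
  by (induction j) (use assms(1,2) in \<open>simp_all add: height_0 height_Suc nth_path_vertex\<close>)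

lemma yoke_entry_add: "yoke_entry n m j (yoke_entry n m j x + c) = yoke_entry n m j (x + c)"
  by (simp add: yoke_entry_def mod_add_left_eq)

lemma yoke_entry_nth: "yoke_vert n m v \<Longrightarrow> yoke_entry n m j (v ! j) = v ! j"
  by (auto simp: yoke_entry_def yoke_vert_def)

lemma yoke_adj_sym: "yoke_adj n m u v \<Longrightarrow> yoke_adj n m v u"
proof -
  assume adj: "yoke_adj n m u v"
  then have v: "yoke_vert n m v"
    by (simp add: yoke_adj_def)
  have reverse_move: "v ! j = yoke_entry n m j (u ! j - c)" if "u ! j = yoke_entry n m j (v ! j + c)" for j c
    using that yoke_entry_add[of n m j "v ! j + c" "- c"] yoke_entry_nth[OF v, of j] by simp
  obtain i where i: "i \<le> m" and same: "\<forall>j<m + 2. j \<noteq> i \<and> j \<noteq> i + 1 \<longrightarrow> u ! j = v ! j"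
    and "(u ! i = yoke_entry n m i (v ! i + 1) \<and> u ! (i + 1) = yoke_entry n m (i + 1) (v ! (i + 1) - 1))
      \<or> (u ! i = yoke_entry n m i (v ! i - 1) \<and> u ! (i + 1) = yoke_entry n m (i + 1) (v ! (i + 1) + 1))"
    using adj unfolding yoke_adj_def by blast
  then have "(v ! i = yoke_entry n m i (u ! i + 1) \<and> v ! (i + 1) = yoke_entry n m (i + 1) (u ! (i + 1) - 1))
      \<or> (v ! i = yoke_entry n m i (u ! i - 1) \<and> v ! (i + 1) = yoke_entry n m (i + 1) (u ! (i + 1) + 1))"
    using reverse_move[of i 1] reverse_move[of i "- 1"] reverse_move[of "i + 1" 1]
      reverse_move[of "i + 1" "- 1"] by auto
  then show ?thesis
    using adj i same unfolding yoke_adj_def by (intro conjI exI[of _ i]) auto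
qed

lemma symp_yoke_adj: "symp (yoke_adj n m)"
  by (auto intro: sympI yoke_adj_sym)

lemma relpowp_symp: "symp R \<Longrightarrow> (R ^^ k) x y \<Longrightarrow> (R ^^ k) y x"
proof (induction k arbitrary: y)
  case 0
  then show ?case by simp
next
  case (Suc k)
  then obtain z where "(R ^^ k) x z" and "R z y"
    by (blast elim: relpowp_Suc_E)
  then show ?case
    using Suc by (metis relpowp_Suc_I2 sympD)
qed

text \<open>The first alternative happens for \<open>n = 1\<close> and \<open>m = 0\<close>: both changed entries are then
  buckets, which are always \<open>0\<close>.\<close>
lemma path_vertex_raise:
  assumes n: "1 \<le> n" and P: "staircase m P" and P': "staircase m (P(i := P i + 1))" and i: "i \<le> m"
  shows "path_vertex n m (P(i := P i + 1)) = path_vertex n m P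
    \<or> yoke_adj n m (path_vertex n m P) (path_vertex n m (P(i := P i + 1)))"
proof -
  let ?u = "path_vertex n m P" and ?v = "path_vertex n m (P(i := P i + 1))"
  have "?u ! j = ?v ! j" if "j < m + 2" "j \<noteq> i" "j \<noteq> i + 1" for j
    using that by (cases j) (simp_all add: nth_path_vertex)
  moreover have "?u ! i = yoke_entry n m i (?v ! i - 1)"
    using i by (auto simp: nth_path_vertex yoke_entry_def mod_diff_left_eq)
  moreover have "?u ! (i + 1) = yoke_entry n m (i + 1) (?v ! (i + 1) + 1)"
    using i by (auto simp: nth_path_vertex yoke_entry_def mod_add_left_eq)
  ultimately show ?thesis
    using yoke_vert_path_vertex[OF n P] yoke_vert_path_vertex[OF n P'] i
    unfolding yoke_adj_def by (metis (no_types, lifting))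
qed

text \<open>Among the positions where \<open>P\<close> lies strictly below \<open>Q\<close>, take one of minimal height of \<open>P\<close>,
  the rightmost such: there \<open>P\<close> has a flat step on the left and an up step on the right.\<close>
lemma staircase_raise_below:
  assumes P: "staircase m P" and Q: "staircase m Q" and j: "j \<le> m" "P j < Q j"
  obtains i where "i \<le> m" "P i < Q i" "staircase m (P(i := P i + 1))"
proof -
  define S where "S = {j. j \<le> m \<and> P j < Q j}"
  have S: "finite S" "j \<in> S"
    using j by (auto simp: S_def)
  define p where "p = Min (P ` S)"
  define i where "i = Max {j \<in> S. P j = p}"
  have "p \<in> P ` S"
    unfolding p_def using S by (intro Min_in) auto
  then have "i \<in> S" and Pi: "P i = p"
    using Max_in[of "{j \<in> S. P j = p}"] S unfolding i_def by auto
  have lowest: "P i \<le> P k" if "k \<in> S" for k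
    using that S Pi unfolding p_def by simp
  have rightmost: "k \<le> i" if "k \<in> S" "P k = P i" for k
    using that S Pi unfolding i_def by (intro Max_ge) auto
  have left: "P (i - 1) = P i" if "0 < i"
  proof -
    have "i - 1 < m" "Suc (i - 1) = i"
      using \<open>i \<in> S\<close> that by (auto simp: S_def)
    then have "P (i - 1) \<noteq> P i - 1"
      using staircaseD[OF Q, of "i - 1"] lowest[of "i - 1"] \<open>i \<in> S\<close> by (fastforce simp: S_def)
    then show ?thesis
      using staircaseD[OF P \<open>i - 1 < m\<close>] \<open>Suc (i - 1) = i\<close> by auto
  qed
  have right: "P (Suc i) = P i + 1" if "i < m"
  proof -
    have "P (Suc i) \<noteq> P i"
      using staircaseD[OF Q that] rightmost[of "Suc i"] \<open>i \<in> S\<close> that by (fastforce simp: S_def)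
    then show ?thesis
      using staircaseD[OF P that] by auto
  qed
  have "staircase m (P(i := P i + 1))"
    unfolding staircase_def
  proof (intro allI impI)
    fix k assume "k < m"
    then show "(P(i := P i + 1)) (Suc k) - (P(i := P i + 1)) k \<in> {0, 1}"
      using P left right unfolding staircase_def
      by (cases "k = i"; cases "Suc k = i") auto
  qed
  then show ?thesis
    using that \<open>i \<in> S\<close> by (auto simp: S_def)
qed

lemma sum_atMost_fun_upd:
  "i \<le> (m :: nat) \<Longrightarrow> (\<Sum>j\<le>m. (P(i := x)) j) = (\<Sum>j\<le>m. P j) - P i + (x :: 'a :: ab_group_add)"
proof -
  assume "i \<le> m"
  have "(\<Sum>j\<le>m. (P(i := x)) j) = (\<Sum>j\<le>m. P j + (if j = i then x - P i else 0))"
    by (intro sum.cong) auto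
  also have "\<dots> = (\<Sum>j\<le>m. P j) + (x - P i)"
    using \<open>i \<le> m\<close> by (simp only: sum.distrib sum.delta) simp
  finally show ?thesis
    by (simp add: algebra_simps)
qed

lemma walk_between_staircases:
  assumes n: "1 \<le> n" and Q: "staircase m Q"
  shows "staircase m P \<Longrightarrow> \<forall>j\<le>m. P j \<le> Q j \<Longrightarrow>
    \<exists>k. int k \<le> (\<Sum>j\<le>m. Q j - P j) \<and> (yoke_adj n m ^^ k) (path_vertex n m P) (path_vertex n m Q)"
proof (induction "nat (\<Sum>j\<le>m. Q j - P j)" arbitrary: P rule: less_induct)
  case (less P)
  show ?case
  proof (cases "\<forall>j\<le>m. P j = Q j")
    case True
    then have "path_vertex n m P = path_vertex n m Q"
      by (intro path_vertex_cong) simp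
    then show ?thesis
      using True by (intro exI[of _ 0]) simp
  next
    case False
    then obtain j where "j \<le> m" "P j < Q j"
      using less.prems(2) order_le_less by blast
    then obtain i where i: "i \<le> m" "P i < Q i" and P': "staircase m (P(i := P i + 1))"
      using staircase_raise_below[OF less.prems(1) Q] by blast
    let ?P' = "P(i := P i + 1)"
    have le': "\<forall>j\<le>m. ?P' j \<le> Q j"
      using less.prems(2) i by simp
    have sum': "(\<Sum>j\<le>m. Q j - ?P' j) = (\<Sum>j\<le>m. Q j - P j) - 1"
      using sum_atMost_fun_upd[OF i(1), of P "P i + 1"] by (simp add: sum_subtractf)
    moreover have "0 \<le> (\<Sum>j\<le>m. Q j - ?P' j)"
      using le' by (intro sum_nonneg) simp
    ultimately have "nat (\<Sum>j\<le>m. Q j - ?P' j) < nat (\<Sum>j\<le>m. Q j - P j)"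
      by linarith
    then obtain k where k: "int k \<le> (\<Sum>j\<le>m. Q j - ?P' j)"
      and walk: "(yoke_adj n m ^^ k) (path_vertex n m ?P') (path_vertex n m Q)"
      using less.hyps[OF _ P' le'] by blast
    from path_vertex_raise[OF n less.prems(1) P' i(1)] show ?thesis
    proof
      assume "path_vertex n m ?P' = path_vertex n m P"
      then show ?thesis
        using k walk sum' by (intro exI[of _ k]) simp
    next
      assume "yoke_adj n m (path_vertex n m P) (path_vertex n m ?P')"
      then have "(yoke_adj n m ^^ Suc k) (path_vertex n m P) (path_vertex n m Q)"
        using walk by (rule relpowp_Suc_I2)
      then show ?thesis
        using k sum' by (intro exI[of _ "Suc k"]) simp
    qed
  qed
qed

text \<open>Shift \<open>u\<close>'s heights by \<open>n t\<close>, descend to the pointwise minimum with \<open>v\<close>'s heights,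
  and ascend from there to \<open>v\<close>.\<close>
lemma walk_le_shifted_l1:
  assumes n: "1 \<le> n" and u: "yoke_vert n m u" and v: "yoke_vert n m v"
  shows "\<exists>k. int k \<le> (\<Sum>j\<le>m. \<bar>height v j - height u j - int n * t\<bar>) \<and> (yoke_adj n m ^^ k) u v"
proof -
  define P where "P = (\<lambda>j. height u j + int n * t)"
  define Q where "Q = height v"
  define M where "M = (\<lambda>j. min (P j) (Q j))"
  have P: "staircase m P"
    using staircase_height[OF u] by (simp add: P_def staircase_def)
  have Q: "staircase m Q"
    using staircase_height[OF v] by (simp add: Q_def)
  have M: "staircase m M"
    unfolding M_def using P Q by (rule staircase_min)
  obtain k1 where k1: "int k1 \<le> (\<Sum>j\<le>m. P j - M j)"
    and walk1: "(yoke_adj n m ^^ k1) (path_vertex n m M) (path_vertex n m P)"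
    using walk_between_staircases[OF n P M] by (auto simp: M_def)
  obtain k2 where k2: "int k2 \<le> (\<Sum>j\<le>m. Q j - M j)"
    and walk2: "(yoke_adj n m ^^ k2) (path_vertex n m M) (path_vertex n m Q)"
    using walk_between_staircases[OF n Q M] by (auto simp: M_def)
  have "path_vertex n m P = u"
    using path_vertex_shift path_vertex_height[OF u] by (simp add: P_def)
  moreover have "path_vertex n m Q = v"
    using path_vertex_height[OF v] by (simp add: Q_def)
  ultimately have "(yoke_adj n m ^^ (k1 + k2)) u v"
    using relpowp_symp[OF symp_yoke_adj walk1] walk2 by (auto intro: relpowp_trans)
  moreover have "(\<Sum>j\<le>m. P j - M j) + (\<Sum>j\<le>m. Q j - M j)
      = (\<Sum>j\<le>m. \<bar>height v j - height u j - int n * t\<bar>)"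
    unfolding sum.distrib[symmetric] by (intro sum.cong) (auto simp: M_def P_def Q_def abs_if min_def)
  ultimately show ?thesis
    using k1 k2 by (intro exI[of _ "k1 + k2"]) simp
qed

lemma height_yoke_adj:
  assumes "yoke_adj n m u v"
  obtains i \<sigma> s where "i \<le> m" "\<bar>\<sigma>\<bar> \<le> 1"
    "\<And>j. j \<le> m \<Longrightarrow> height u j = height v j + (if j = i then \<sigma> else 0) + int n * s"
proof -
  obtain i where i: "i \<le> m" and same: "\<forall>j<m + 2. j \<noteq> i \<and> j \<noteq> i + 1 \<longrightarrow> u ! j = v ! j"
    and "\<exists>\<sigma>\<in>{1, -1}. u ! i = yoke_entry n m i (v ! i + \<sigma>)
      \<and> u ! (i + 1) = yoke_entry n m (i + 1) (v ! (i + 1) - \<sigma>)"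
    using assms unfolding yoke_adj_def by force
  then obtain \<sigma> where "\<sigma> \<in> {1, -1}" and at_i: "u ! i = yoke_entry n m i (v ! i + \<sigma>)"
    and at_Suc_i: "u ! (i + 1) = yoke_entry n m (i + 1) (v ! (i + 1) - \<sigma>)"
    by blast
  then have \<sigma>: "\<bar>\<sigma>\<bar> \<le> 1"
    by auto
  define s where "s = (if i = 0 then - ((v ! 0 + \<sigma>) div int n) else 0)"
  text \<open>Only the first bucket can wrap around modulo \<open>n\<close> below height index \<open>m\<close>.\<close>
  have entry: "u ! k = v ! k + (if k = i then \<sigma> + int n * s else 0) + (if k = i + 1 then - \<sigma> else 0)"
    if "k \<le> m" for k
  proof -
    have "(v ! 0 + \<sigma>) mod int n = v ! 0 + \<sigma> + int n * s" if "i = 0"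
      using that by (simp add: s_def minus_div_mult_eq_mod[symmetric] algebra_simps)
    then show ?thesis
      using same at_i at_Suc_i i \<open>k \<le> m\<close> by (auto simp: yoke_entry_def s_def)
  qed
  have "height u j = height v j + (if j = i then \<sigma> else 0) + int n * s" if "j \<le> m" for j
  proof -
    have "height u j = (\<Sum>k\<le>j. v ! k + (if k = i then \<sigma> + int n * s else 0)
        + (if k = i + 1 then - \<sigma> else 0))"
      unfolding height_def using that entry by (intro sum.cong) auto
    also have "\<dots> = height v j + (if i \<le> j then \<sigma> + int n * s else 0) + (if i + 1 \<le> j then - \<sigma> else 0)"
      by (simp add: sum.distrib height_def)
    finally show ?thesis
      by (auto simp: s_def)
  qed
  then show ?thesis
    using that i \<sigma> by blast
qed

lemma shifted_l1_le_walk: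
  "(yoke_adj n m ^^ k) u v \<Longrightarrow> \<exists>t. (\<Sum>j\<le>m. \<bar>height v j - height u j - int n * t\<bar>) \<le> int k"
proof (induction k arbitrary: v)
  case 0
  then show ?case
    by (intro exI[of _ 0]) simp
next
  case (Suc k)
  then obtain w where "(yoke_adj n m ^^ k) u w" and "yoke_adj n m w v"
    by (blast elim: relpowp_Suc_E)
  moreover obtain i \<sigma> s where i: "i \<le> m" "\<bar>\<sigma>\<bar> \<le> 1"
    and w: "\<And>j. j \<le> m \<Longrightarrow> height w j = height v j + (if j = i then \<sigma> else 0) + int n * s"
    using height_yoke_adj[OF \<open>yoke_adj n m w v\<close>] by blast
  ultimately obtain t where t: "(\<Sum>j\<le>m. \<bar>height w j - height u j - int n * t\<bar>) \<le> int k"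
    using Suc.IH by blast
  have "(\<Sum>j\<le>m. \<bar>height v j - height u j - int n * (t - s)\<bar>)
      \<le> (\<Sum>j\<le>m. \<bar>height w j - height u j - int n * t\<bar> + (if j = i then 1 else 0))"
  proof (intro sum_mono)
    fix j assume "j \<in> {..m}"
    then have "height v j - height u j - int n * (t - s)
        = (height w j - height u j - int n * t) - (if j = i then \<sigma> else 0)"
      using w by (simp add: algebra_simps)
    then show "\<bar>height v j - height u j - int n * (t - s)\<bar>
        \<le> \<bar>height w j - height u j - int n * t\<bar> + (if j = i then 1 else 0)"
      using i(2) by auto
  qed
  also have "\<dots> = (\<Sum>j\<le>m. \<bar>height w j - height u j - int n * t\<bar>) + 1"
    using i(1) by (simp add: sum.distrib)
  finally show ?case
    using t by (intro exI[of _ "t - s"]) simp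
qed

lemma abs_diff_le_of_unit_steps:
  fixes d :: "nat \<Rightarrow> int"
  assumes steps: "\<forall>j<m. \<bar>d (Suc j) - d j\<bar> \<le> 1" and "a \<le> b" and "b \<le> m"
  shows "\<bar>d b - d a\<bar> \<le> int b - int a"
  using \<open>a \<le> b\<close> \<open>b \<le> m\<close>
proof (induction b rule: dec_induct)
  case (step b)
  then show ?case
    using steps[rule_format, of b] by simp
qed simp

lemma sum_abs_diff_atMost_le: "j0 \<le> m \<Longrightarrow> 2 * (\<Sum>j\<le>m. \<bar>int j - int j0\<bar>) \<le> int m * (int m + 1)"
proof -
  assume "j0 \<le> m"
  have "(\<Sum>j\<le>m. \<bar>int j - int j0\<bar>) = (\<Sum>j\<le>m. \<bar>int (m - j) - int j0\<bar>)"
    by (rule sum.reindex_bij_witness[where i="\<lambda>j. m - j" and j="\<lambda>j. m - j"]) auto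
  then have "2 * (\<Sum>j\<le>m. \<bar>int j - int j0\<bar>) = (\<Sum>j\<le>m. \<bar>int j - int j0\<bar> + \<bar>int (m - j) - int j0\<bar>)"
    by (simp add: sum.distrib)
  also have "\<dots> \<le> (\<Sum>j\<le>m. int m)"
    by (intro sum_mono) (use \<open>j0 \<le> m\<close> in auto)
  finally show ?thesis
    by (simp add: algebra_simps)
qed

text \<open>If \<open>d\<close> hits a multiple of \<open>n\<close>, the deviations grow at most linearly around that point, which
  is where \<open>m \<le> n\<close> enters. Otherwise \<open>d\<close> stays strictly between two consecutive multiples of \<open>n\<close>,
  and the deviations from these two add up to \<open>n\<close> at every position.\<close>
lemma exists_shift_sum_abs_le:
  fixes d :: "nat \<Rightarrow> int"
  assumes n: "1 \<le> n" and "m \<le> n" and steps: "\<forall>j<m. \<bar>d (Suc j) - d j\<bar> \<le> 1"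
  shows "\<exists>t. 2 * (\<Sum>j\<le>m. \<bar>d j - int n * t\<bar>) \<le> int n * (int m + 1)"
proof (cases "\<exists>j0\<le>m. int n dvd d j0")
  case True
  then obtain j0 t where j0: "j0 \<le> m" "d j0 = int n * t"
    unfolding dvd_def by blast
  have "(\<Sum>j\<le>m. \<bar>d j - int n * t\<bar>) \<le> (\<Sum>j\<le>m. \<bar>int j - int j0\<bar>)"
  proof (intro sum_mono)
    fix j assume "j \<in> {..m}"
    then show "\<bar>d j - int n * t\<bar> \<le> \<bar>int j - int j0\<bar>"
      using abs_diff_le_of_unit_steps[OF steps, of j0 j] abs_diff_le_of_unit_steps[OF steps, of j j0] j0
      by (cases "j0 \<le> j") auto
  qed
  then have "2 * (\<Sum>j\<le>m. \<bar>d j - int n * t\<bar>) \<le> int m * (int m + 1)"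
    using sum_abs_diff_atMost_le[OF j0(1)] by linarith
  also have "\<dots> \<le> int n * (int m + 1)"
    using \<open>m \<le> n\<close> by (intro mult_right_mono) auto
  finally show ?thesis
    by blast
next
  case False
  define q where "q = d 0 div int n"
  have between: "int n * q < d j \<and> d j < int n * q + int n" if "j \<le> m" for j
    using that
  proof (induction j)
    case 0
    have "d 0 = int n * q + d 0 mod int n"
      by (simp add: q_def)
    moreover have "0 \<le> d 0 mod int n" "d 0 mod int n < int n"
      using n by simp_all
    moreover have "d 0 \<noteq> int n * q"
      using False by auto
    ultimately show ?case
      by linarith
  next
    case (Suc j)
    have "int n * q < d j \<and> d j < int n * q + int n" "\<bar>d (Suc j) - d j\<bar> \<le> 1"
      using Suc steps by simp_all
    moreover have "d (Suc j) \<noteq> int n * q" "d (Suc j) \<noteq> int n * (q + 1)"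
      using False Suc.prems unfolding dvd_def by blast+
    ultimately show ?case
      by (auto simp: algebra_simps)
  qed
  have "(\<Sum>j\<le>m. \<bar>d j - int n * q\<bar>) + (\<Sum>j\<le>m. \<bar>d j - int n * (q + 1)\<bar>) = (\<Sum>j\<le>m. int n)"
    unfolding sum.distrib[symmetric]
  proof (intro sum.cong refl)
    fix j assume "j \<in> {..m}"
    then have "int n * q < d j" "d j < int n * q + int n"
      using between by auto
    then show "\<bar>d j - int n * q\<bar> + \<bar>d j - int n * (q + 1)\<bar> = int n"
      by (simp add: abs_if algebra_simps)
  qed
  then have "2 * (\<Sum>j\<le>m. \<bar>d j - int n * q\<bar>) \<le> int n * (int m + 1)
      \<or> 2 * (\<Sum>j\<le>m. \<bar>d j - int n * (q + 1)\<bar>) \<le> int n * (int m + 1)"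
    by (simp add: algebra_simps) linarith
  then show ?thesis
    by blast
qed

lemma yoke_dist_le:
  assumes "1 \<le> n" and "m \<le> n" and u: "yoke_vert n m u" and v: "yoke_vert n m v"
  shows "yoke_dist n m u v \<le> enat (n * (m + 1) div 2)"
proof -
  have "\<forall>j<m. \<bar>(height v (Suc j) - height u (Suc j)) - (height v j - height u j)\<bar> \<le> 1"
    using staircaseD[OF staircase_height[OF u]] staircaseD[OF staircase_height[OF v]] by fastforce
  then obtain t where t: "2 * (\<Sum>j\<le>m. \<bar>height v j - height u j - int n * t\<bar>) \<le> int n * (int m + 1)"
    using exists_shift_sum_abs_le[OF assms(1,2), of "\<lambda>j. height v j - height u j"] by auto
  obtain k where k: "int k \<le> (\<Sum>j\<le>m. \<bar>height v j - height u j - int n * t\<bar>)"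
    and walk: "(yoke_adj n m ^^ k) u v"
    using walk_le_shifted_l1[OF assms(1) u v] by blast
  have "int (2 * k) \<le> int (n * (m + 1))"
    using k t by (simp add: algebra_simps)
  then have "2 * k \<le> n * (m + 1)"
    by (simp only: of_nat_le_iff)
  then have "k \<le> n * (m + 1) div 2"
    by linarith
  moreover have "yoke_dist n m u v \<le> enat k"
    unfolding yoke_dist_def using walk by (intro INF_lower) simp
  ultimately show ?thesis
    by (meson enat_ord_simps(1) order_trans)
qed

definition antipodal_height :: "nat \<Rightarrow> nat \<Rightarrow> nat \<Rightarrow> int" where
  "antipodal_height n m j = int (n div 2) + (if odd n \<and> m < 2 * j then 1 else 0)"

lemma staircase_antipodal_height: "staircase m (antipodal_height n m)"
  unfolding staircase_def antipodal_height_def by auto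

lemma sum_antipodal_height: "(\<Sum>j\<le>m. antipodal_height n m j) = int (n * (m + 1) div 2)"
proof -
  have "{..m} \<inter> {j. m < 2 * j} = {Suc (m div 2)..m}"
    by auto
  then have "(\<Sum>j\<le>m. if m < 2 * j then 1 else 0 :: int) = int ((m + 1) div 2)"
    by (simp add: sum.If_cases)
  moreover have "n * (m + 1) div 2 = (m + 1) * (n div 2) + (if odd n then (m + 1) div 2 else 0)"
    by (cases "even n") (auto elim!: evenE oddE simp: algebra_simps)
  ultimately show ?thesis
    by (cases "odd n") (simp_all add: antipodal_height_def sum.distrib distrib_right)
qed

lemma sum_abs_antipodal_height_ge:
  "int (n * (m + 1) div 2) \<le> (\<Sum>j\<le>m. \<bar>antipodal_height n m j - int n * t\<bar>)"
proof (cases "t \<le> 0")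
  case True
  then have "int n * t \<le> 0"
    by (simp add: mult_nonneg_nonpos)
  then have "(\<Sum>j\<le>m. antipodal_height n m j) \<le> (\<Sum>j\<le>m. \<bar>antipodal_height n m j - int n * t\<bar>)"
    by (intro sum_mono) (simp add: antipodal_height_def)
  then show ?thesis
    by (simp add: sum_antipodal_height)
next
  case False
  then have "int n * 1 \<le> int n * t"
    by (intro mult_left_mono) auto
  then have "(\<Sum>j\<le>m. int n - antipodal_height n m j) \<le> (\<Sum>j\<le>m. \<bar>antipodal_height n m j - int n * t\<bar>)"
    by (intro sum_mono) arith
  moreover have "(\<Sum>j\<le>m. int n - antipodal_height n m j) = int n * (int m + 1) - int (n * (m + 1) div 2)"
    by (simp add: sum_subtractf sum_antipodal_height algebra_simps)
  moreover have "int (2 * (n * (m + 1) div 2)) \<le> int (n * (m + 1))"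
    by (intro of_nat_mono) simp
  ultimately show ?thesis
    by (simp add: algebra_simps)
qed

lemma yoke_dist_antipodal_ge:
  assumes n: "1 \<le> n"
  shows "enat (n * (m + 1) div 2)
    \<le> yoke_dist n m (path_vertex n m (\<lambda>_. 0)) (path_vertex n m (antipodal_height n m))"
  unfolding yoke_dist_def
proof (rule INF_greatest)
  fix k assume "k \<in> {k. (yoke_adj n m ^^ k) (path_vertex n m (\<lambda>_. 0)) (path_vertex n m (antipodal_height n m))}"
  then obtain t where "(\<Sum>j\<le>m. \<bar>height (path_vertex n m (antipodal_height n m)) j
      - height (path_vertex n m (\<lambda>_. 0)) j - int n * t\<bar>) \<le> int k"
    using shifted_l1_le_walk by blast
  moreover have "0 \<le> antipodal_height n m 0" "antipodal_height n m 0 < int n"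
    using n by (auto simp: antipodal_height_def)
  ultimately have "(\<Sum>j\<le>m. \<bar>antipodal_height n m j - int n * t\<bar>) \<le> int k"
    using n by (simp add: height_path_vertex)
  then show "enat (n * (m + 1) div 2) \<le> enat k"
    using sum_abs_antipodal_height_ge[of n m t] by simp
qed

theorem theorem5p15:
  fixes n m :: nat
  assumes "1 \<le> n" and "m \<le> n"
  shows "yoke_diam n m = enat (n * (m + 1) div 2)"
proof (rule antisym)
  show "yoke_diam n m \<le> enat (n * (m + 1) div 2)"
    unfolding yoke_diam_def by (rule SUP_least) (clarify, rule yoke_dist_le[OF assms]; simp)
next
  let ?z = "path_vertex n m (\<lambda>_. 0)" and ?w = "path_vertex n m (antipodal_height n m)"
  have "yoke_vert n m ?z" "yoke_vert n m ?w"
    using yoke_vert_path_vertex[OF assms(1)] staircase_antipodal_height by (auto simp: staircase_def)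
  then have "yoke_dist n m ?z ?w \<le> yoke_diam n m"
    unfolding yoke_diam_def by (intro SUP_upper2[of "(?z, ?w)"]) auto
  then show "enat (n * (m + 1) div 2) \<le> yoke_diam n m"
    using yoke_dist_antipodal_ge[OF assms(1)] by (rule order_trans[rotated])
qed

end
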